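(* Let $G$ be a two-player stage game and consider the mixed-pure regime. There exist a positive integer $T$ and an SPE of $G(T)$ in which locally suboptimal behavior occurs if and only if at least one of the following holds: (1) $|V_1^{m,p}|>1$, $|V_2^{m,p}|>1$, and there exist $\hat\sigma_1\in\Delta A_1,\hat a_2\in A_2$ with $(\hat\sigma_1,\hat a_2)\notin\mathrm{Nash}^{m,p}(G)$; (2) $|V_1^{m,p}|>1$, $|V_2^{m,p}|=1$, and there exist $\hat\sigma_1\in\Delta A_1$, $a_1'\in A_1$, $\hat a_2\in A_2$ such that (a) $u_1(\hat\sigma_1,\hat a_2)<u_1(a_1',\hat a_2)$, (b) $\hat a_2$ is a best response to $\hat\sigma_1$, and (c) if $|S_{\hat\sigma_1}|>1$, then, with $D=\{u_1(\sigma)-u_1(\sigma'):\sigma,\sigma'\in\mathrm{Nash}^{m,p}(G)\}$, there is $a\in S_{\hat\sigma_1}$ such that for every $a'\in S_{\hat\sigma_1}\setminus\{a\}$ there exist an integer $n_{a'}\ge0$ and $d_1^{a'},\dots,d_{n_{a'}}^{a'}\in D$ with $u_1(a,\hat a_2)-u_1(a',\hat a_2)=\sum_{k=1}^{n_{a'}}d_k^{a'}$; (3) $|V_1^{m,p}|=1$, $|V_2^{m,p}|>1$, and there exist $\hat\sigma_1\in\Delta A_1$, $\hat a_2,a_2'\in A_2$ with $u_2(\hat\sigma_1,\hat a_2)<u_2(\hat\sigma_1,a_2')$ and $\hat\sigma_1$ a best response to $\hat a_2$.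
   Context: A two-player stage game $G$ consists of finite nonempty action sets $A_1,A_2$ and payoff functions $u_1,u_2:A_1\times A_2\to\mathbb{R}$, extended to mixed strategies by expectation; $S_{\sigma_1}=\{a\in A_1:\sigma_1(a)>0\}$ is the support. In the mixed-pure regime, player 1 may use mixed strategies while player 2 is restricted to actions, both in the stage game and in every round of the repeated game (including deviations). $G(T)$ is the $T$-round repetition of $G$ with realized actions observed after each round and payoffs equal to the expected sum of stage payoffs; player 1's strategy maps histories $\bigcup_{k=0}^{T-1}(A_1\times A_2)^k$ to $\Delta A_1$ and player 2's maps histories to $A_2$. A profile is an SPE if its continuation after every history of length $k<T$ is a Nash equilibrium of $G(T-k)$ in this regime. $\mathrm{Nash}^{m,p}(G)$ is the set of $(\sigma_1,a_2)\in\Delta A_1\times A_2$ with $\sigma_1$ a best response to $a_2$ and $a_2$ a best response among actions to $\sigma_1$; $V_i^{m,p}=\{u_i(\sigma):\sigma\in\mathrm{Nash}^{m,p}(G)\}$. Locally suboptimal behavior occurs in an SPE $\mu$ of $G(T)$ if for some history $h$ of length $k<T$, $(\mu_1(h),\mu_2(h))\notin\mathrm{Nash}^{m,p}(G)$. *)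

theory Defs
  imports Complex_Main
begin

definition mixed :: "'a set \<Rightarrow> ('a \<Rightarrow> real) set" where
  "mixed A = {\<sigma>. (\<forall>a\<in>A. 0 \<le> \<sigma> a) \<and> (\<forall>a. a \<notin> A \<longrightarrow> \<sigma> a = 0) \<and> sum \<sigma> A = 1}"

definition support :: "'a set \<Rightarrow> ('a \<Rightarrow> real) \<Rightarrow> 'a set" where
  "support A \<sigma> = {a\<in>A. 0 < \<sigma> a}"

definition eu :: "'a set \<Rightarrow> ('a \<Rightarrow> 'b \<Rightarrow> real) \<Rightarrow> ('a \<Rightarrow> real) \<Rightarrow> 'b \<Rightarrow> real" where
  "eu A u \<sigma> b = (\<Sum>a\<in>A. \<sigma> a * u a b)"

definition br1 :: "'a set \<Rightarrow> ('a \<Rightarrow> 'b \<Rightarrow> real) \<Rightarrow> ('a \<Rightarrow> real) \<Rightarrow> 'b \<Rightarrow> bool" where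
  "br1 A1 u1 \<sigma> b \<longleftrightarrow> \<sigma> \<in> mixed A1 \<and> (\<forall>\<sigma>'\<in>mixed A1. eu A1 u1 \<sigma>' b \<le> eu A1 u1 \<sigma> b)"

definition br2 :: "'a set \<Rightarrow> 'b set \<Rightarrow> ('a \<Rightarrow> 'b \<Rightarrow> real) \<Rightarrow> ('a \<Rightarrow> real) \<Rightarrow> 'b \<Rightarrow> bool" where
  "br2 A1 A2 u2 \<sigma> b \<longleftrightarrow> b \<in> A2 \<and> (\<forall>b'\<in>A2. eu A1 u2 \<sigma> b' \<le> eu A1 u2 \<sigma> b)"

definition NashMP :: "'a set \<Rightarrow> 'b set \<Rightarrow> ('a \<Rightarrow> 'b \<Rightarrow> real) \<Rightarrow> ('a \<Rightarrow> 'b \<Rightarrow> real)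
    \<Rightarrow> (('a \<Rightarrow> real) \<times> 'b) set" where
  "NashMP A1 A2 u1 u2 = {(\<sigma>, b). \<sigma> \<in> mixed A1 \<and> b \<in> A2 \<and> br1 A1 u1 \<sigma> b \<and> br2 A1 A2 u2 \<sigma> b}"

text \<open>Equilibrium payoff set V_i^{m,p} for a payoff function u (u1 or u2).\<close>
definition Vset :: "'a set \<Rightarrow> 'b set \<Rightarrow> ('a \<Rightarrow> 'b \<Rightarrow> real) \<Rightarrow> ('a \<Rightarrow> 'b \<Rightarrow> real)
    \<Rightarrow> ('a \<Rightarrow> 'b \<Rightarrow> real) \<Rightarrow> real set" where
  "Vset A1 A2 u1 u2 u = {eu A1 u \<sigma> b | \<sigma> b. (\<sigma>, b) \<in> NashMP A1 A2 u1 u2}"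

text \<open>Histories are lists of realized action pairs, oldest first.\<close>
definition hist :: "'a set \<Rightarrow> 'b set \<Rightarrow> ('a \<times> 'b) list \<Rightarrow> bool" where
  "hist A1 A2 h \<longleftrightarrow> set h \<subseteq> A1 \<times> A2"

definition strat1 :: "'a set \<Rightarrow> 'b set \<Rightarrow> nat \<Rightarrow> (('a \<times> 'b) list \<Rightarrow> 'a \<Rightarrow> real) \<Rightarrow> bool" where
  "strat1 A1 A2 T s \<longleftrightarrow> (\<forall>h. hist A1 A2 h \<and> length h < T \<longrightarrow> s h \<in> mixed A1)"

definition strat2 :: "'a set \<Rightarrow> 'b set \<Rightarrow> nat \<Rightarrow> (('a \<times> 'b) list \<Rightarrow> 'b) \<Rightarrow> bool" where
  "strat2 A1 A2 T s \<longleftrightarrow> (\<forall>h. hist A1 A2 h \<and> length h < T \<longrightarrow> s h \<in> A2)"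

fun rpay :: "'a set \<Rightarrow> ('a \<Rightarrow> 'b \<Rightarrow> real) \<Rightarrow> nat \<Rightarrow> (('a \<times> 'b) list \<Rightarrow> 'a \<Rightarrow> real)
    \<Rightarrow> (('a \<times> 'b) list \<Rightarrow> 'b) \<Rightarrow> ('a \<times> 'b) list \<Rightarrow> real" where
  "rpay A u 0 s1 s2 h = 0"
| "rpay A u (Suc n) s1 s2 h =
     (\<Sum>a\<in>A. s1 h a * (u a (s2 h) + rpay A u n s1 s2 (h @ [(a, s2 h)])))"

definition payoff :: "'a set \<Rightarrow> ('a \<Rightarrow> 'b \<Rightarrow> real) \<Rightarrow> nat \<Rightarrow> (('a \<times> 'b) list \<Rightarrow> 'a \<Rightarrow> real)
    \<Rightarrow> (('a \<times> 'b) list \<Rightarrow> 'b) \<Rightarrow> real" where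
  "payoff A u T s1 s2 = rpay A u T s1 s2 []"

text \<open>Nash equilibrium of G(T) in the mixed-pure regime: player 1 deviates to
  any (behavioural mixed) strategy, player 2 only to pure strategies.\<close>
definition NashRep :: "'a set \<Rightarrow> 'b set \<Rightarrow> ('a \<Rightarrow> 'b \<Rightarrow> real) \<Rightarrow> ('a \<Rightarrow> 'b \<Rightarrow> real) \<Rightarrow> nat
    \<Rightarrow> (('a \<times> 'b) list \<Rightarrow> 'a \<Rightarrow> real) \<Rightarrow> (('a \<times> 'b) list \<Rightarrow> 'b) \<Rightarrow> bool" where
  "NashRep A1 A2 u1 u2 T s1 s2 \<longleftrightarrow>
     strat1 A1 A2 T s1 \<and> strat2 A1 A2 T s2 \<and>
     (\<forall>s1'. strat1 A1 A2 T s1' \<longrightarrow> payoff A1 u1 T s1' s2 \<le> payoff A1 u1 T s1 s2) \<and>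
     (\<forall>s2'. strat2 A1 A2 T s2' \<longrightarrow> payoff A1 u2 T s1 s2' \<le> payoff A1 u2 T s1 s2)"

definition cont :: "(('a \<times> 'b) list \<Rightarrow> 'c) \<Rightarrow> ('a \<times> 'b) list \<Rightarrow> (('a \<times> 'b) list \<Rightarrow> 'c)" where
  "cont s h = (\<lambda>h'. s (h @ h'))"

definition SPE :: "'a set \<Rightarrow> 'b set \<Rightarrow> ('a \<Rightarrow> 'b \<Rightarrow> real) \<Rightarrow> ('a \<Rightarrow> 'b \<Rightarrow> real) \<Rightarrow> nat
    \<Rightarrow> (('a \<times> 'b) list \<Rightarrow> 'a \<Rightarrow> real) \<Rightarrow> (('a \<times> 'b) list \<Rightarrow> 'b) \<Rightarrow> bool" where
  "SPE A1 A2 u1 u2 T s1 s2 \<longleftrightarrow>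
     strat1 A1 A2 T s1 \<and> strat2 A1 A2 T s2 \<and>
     (\<forall>h. hist A1 A2 h \<and> length h < T \<longrightarrow>
        NashRep A1 A2 u1 u2 (T - length h) (cont s1 h) (cont s2 h))"

definition locally_suboptimal :: "'a set \<Rightarrow> 'b set \<Rightarrow> ('a \<Rightarrow> 'b \<Rightarrow> real) \<Rightarrow> ('a \<Rightarrow> 'b \<Rightarrow> real)
    \<Rightarrow> nat \<Rightarrow> (('a \<times> 'b) list \<Rightarrow> 'a \<Rightarrow> real) \<Rightarrow> (('a \<times> 'b) list \<Rightarrow> 'b) \<Rightarrow> bool" where
  "locally_suboptimal A1 A2 u1 u2 T s1 s2 \<longleftrightarrow>
     (\<exists>h. hist A1 A2 h \<and> length h < T \<and> (s1 h, s2 h) \<notin> NashMP A1 A2 u1 u2)"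

end

theory Submission
  imports Defs
begin

text \<open>By the one-shot deviation principle, a profile of the repeated game is an SPE iff no player
  gains from deviating in a single round and conforming afterwards.

  Sufficiency: play the non-equilibrium profile in the first round and afterwards a fixed sequence
  of stage equilibria that depends on the first-round outcome. A player whose equilibrium payoffs
  take two values can be rewarded or punished by long enough blocks of the better or worse
  equilibrium, which removes any first-round incentive to deviate. A player with a single
  equilibrium payoff cannot be influenced, so his first-round action must already be a best
  response; in addition, player 1 must be indifferent on the support of his mixture, which can
  be arranged exactly when the payoff gaps on the support are sums of equilibrium payoff
  differences.

  Necessity: consider the last round in which a non-equilibrium profile is played. From then on
  every continuation is a sequence of stage equilibria, so continuation payoffs are sums of
  equilibrium payoffs, and the one-shot conditions in that round give (1), (2) or (3).\<close>

definition pure :: "'a \<Rightarrow> 'a \<Rightarrow> real" where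
  "pure a = (\<lambda>x. if x = a then 1 else 0)"

lemma pure_mixed: "finite A \<Longrightarrow> a \<in> A \<Longrightarrow> pure a \<in> mixed A"
  by (auto simp: mixed_def pure_def)

lemma sum_pure: "finite A \<Longrightarrow> a \<in> A \<Longrightarrow> (\<Sum>x\<in>A. pure a x * f x) = f a"
  by (simp add: pure_def if_distrib[of "\<lambda>c. c * _"] sum.delta' cong: if_cong)

lemma eu_pure: "finite A \<Longrightarrow> a \<in> A \<Longrightarrow> eu A u (pure a) b = u a b"
  by (simp add: eu_def sum_pure)

lemma mixed_nonneg: "\<sigma> \<in> mixed A \<Longrightarrow> 0 \<le> \<sigma> a"
  by (cases "a \<in> A") (auto simp: mixed_def)

lemma mixed_sum: "\<sigma> \<in> mixed A \<Longrightarrow> sum \<sigma> A = 1"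
  by (simp add: mixed_def)

lemma sum_mixed_const: "\<sigma> \<in> mixed A \<Longrightarrow> (\<Sum>x\<in>A. \<sigma> x * c) = c"
  by (simp add: sum_distrib_right[symmetric] mixed_sum)

lemma sum_mixed_plus_const:
  "\<sigma> \<in> mixed A \<Longrightarrow> (\<Sum>x\<in>A. \<sigma> x * (f x + c)) = (\<Sum>x\<in>A. \<sigma> x * f x) + c"
  by (simp add: distrib_left sum.distrib sum_mixed_const)

lemma sum_mixed_mono:
  "\<sigma> \<in> mixed A \<Longrightarrow> (\<And>x. x \<in> A \<Longrightarrow> f x \<le> g x) \<Longrightarrow> (\<Sum>x\<in>A. \<sigma> x * f x) \<le> (\<Sum>x\<in>A. \<sigma> x * g x)"
  by (intro sum_mono mult_left_mono) (auto simp: mixed_nonneg)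

lemma support_nonempty:
  assumes "finite A" "\<sigma> \<in> mixed A" shows "support A \<sigma> \<noteq> {}"
proof
  assume "support A \<sigma> = {}"
  then have "\<forall>a\<in>A. \<sigma> a = 0"
    using mixed_nonneg[OF assms(2)] by (auto simp: support_def less_le)
  then show False using mixed_sum[OF assms(2)] by simp
qed

lemma sum_mixed_support_const:
  assumes "\<sigma> \<in> mixed A" "\<And>x. x \<in> support A \<sigma> \<Longrightarrow> f x = c"
  shows "(\<Sum>x\<in>A. \<sigma> x * f x) = c"
proof -
  have "(\<Sum>x\<in>A. \<sigma> x * f x) = (\<Sum>x\<in>A. \<sigma> x * c)"
  proof (rule sum.cong[OF refl])
    fix x assume "x \<in> A"
    then show "\<sigma> x * f x = \<sigma> x * c"
      using assms mixed_nonneg[OF assms(1), of x] by (cases "0 < \<sigma> x") (auto simp: support_def)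
  qed
  then show ?thesis by (simp add: sum_mixed_const[OF assms(1)])
qed

lemma mixed_average_max_on_support:
  assumes "finite A" "\<sigma> \<in> mixed A" "\<And>x. x \<in> A \<Longrightarrow> X x \<le> R" "(\<Sum>x\<in>A. \<sigma> x * X x) = R"
    and "a \<in> support A \<sigma>"
  shows "X a = R"
proof -
  have "(\<Sum>x\<in>A. \<sigma> x * (R - X x)) = 0"
    using assms(4) by (simp add: right_diff_distrib sum_subtractf sum_mixed_const[OF assms(2)])
  moreover have "\<forall>x\<in>A. 0 \<le> \<sigma> x * (R - X x)"
    using assms(3) mixed_nonneg[OF assms(2)] by simp
  ultimately show ?thesis
    using assms(1,5) by (auto simp: sum_nonneg_eq_0_iff support_def)
qed

lemma mem_NashMP_iff:
  "p \<in> NashMP A1 A2 u1 u2 \<longleftrightarrow>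
    fst p \<in> mixed A1 \<and> snd p \<in> A2 \<and> br1 A1 u1 (fst p) (snd p) \<and> br2 A1 A2 u2 (fst p) (snd p)"
  by (cases p) (simp add: NashMP_def)

lemma br1_iff_pure:
  assumes "finite A1"
  shows "br1 A1 u1 \<sigma> b \<longleftrightarrow> \<sigma> \<in> mixed A1 \<and> (\<forall>a\<in>A1. u1 a b \<le> eu A1 u1 \<sigma> b)"
proof
  assume "br1 A1 u1 \<sigma> b"
  then show "\<sigma> \<in> mixed A1 \<and> (\<forall>a\<in>A1. u1 a b \<le> eu A1 u1 \<sigma> b)"
    using assms by (metis br1_def eu_pure pure_mixed)
next
  assume br: "\<sigma> \<in> mixed A1 \<and> (\<forall>a\<in>A1. u1 a b \<le> eu A1 u1 \<sigma> b)"
  have "eu A1 u1 \<sigma>' b \<le> eu A1 u1 \<sigma> b" if "\<sigma>' \<in> mixed A1" for \<sigma>'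
    using sum_mixed_mono[OF that, of "\<lambda>a. u1 a b" "\<lambda>_. eu A1 u1 \<sigma> b"] br
    by (simp add: eu_def sum_mixed_const[OF that])
  with br show "br1 A1 u1 \<sigma> b" by (simp add: br1_def)
qed

lemma br1_support_payoff:
  "finite A1 \<Longrightarrow> br1 A1 u1 \<sigma> b \<Longrightarrow> a \<in> support A1 \<sigma> \<Longrightarrow> u1 a b = eu A1 u1 \<sigma> b"
  by (rule mixed_average_max_on_support[of A1 \<sigma> "\<lambda>a. u1 a b"])
    (simp_all add: br1_iff_pure eu_def)

lemma NashMP_if_pure_NashMP:
  assumes fin: "finite A1" and \<sigma>: "\<sigma> \<in> mixed A1" and b: "b \<in> A2"
    and pure_Nash: "\<And>a b. a \<in> A1 \<Longrightarrow> b \<in> A2 \<Longrightarrow> (pure a, b) \<in> NashMP A1 A2 u1 u2"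
  shows "(\<sigma>, b) \<in> NashMP A1 A2 u1 u2"
proof -
  have br1: "br1 A1 u1 (pure a) b" and br2: "br2 A1 A2 u2 (pure a) b" if "a \<in> A1" for a
    using pure_Nash[OF that b] by (auto simp: NashMP_def)
  have const: "u1 x b = u1 a b" if "a \<in> A1" "x \<in> A1" for a x
    using br1[of a] br1[of x] that fin by (force simp: br1_iff_pure eu_pure)
  have "u1 a b \<le> eu A1 u1 \<sigma> b" if "a \<in> A1" for a
  proof -
    have "eu A1 u1 \<sigma> b = u1 a b"
      unfolding eu_def by (rule sum_mixed_support_const[OF \<sigma>]) (simp add: const that support_def)
    then show ?thesis by simp
  qed
  then have "br1 A1 u1 \<sigma> b" using fin \<sigma> by (simp add: br1_iff_pure)
  moreover have "eu A1 u2 \<sigma> b' \<le> eu A1 u2 \<sigma> b" if "b' \<in> A2" for b'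
    unfolding eu_def
    by (rule sum_mixed_mono[OF \<sigma>]) (use br2 that fin in \<open>simp add: br2_def eu_pure\<close>)
  then have "br2 A1 A2 u2 \<sigma> b" using b by (simp add: br2_def)
  ultimately show ?thesis using \<sigma> b by (simp add: NashMP_def)
qed

lemma Vset_two_values:
  assumes "\<exists>x\<in>Vset A1 A2 u1 u2 u. \<exists>y\<in>Vset A1 A2 u1 u2 u. x \<noteq> y"
  obtains p q where "p \<in> NashMP A1 A2 u1 u2" "q \<in> NashMP A1 A2 u1 u2"
    "eu A1 u (fst q) (snd q) < eu A1 u (fst p) (snd p)"
proof -
  obtain p q where "p \<in> NashMP A1 A2 u1 u2" "q \<in> NashMP A1 A2 u1 u2"
    "eu A1 u (fst q) (snd q) \<noteq> eu A1 u (fst p) (snd p)"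
    using assms by (auto simp: Vset_def)
  then show ?thesis by (metis linorder_neqE that)
qed

lemma Vset_singletonD:
  "Vset A1 A2 u1 u2 u = {v} \<Longrightarrow> p \<in> NashMP A1 A2 u1 u2 \<Longrightarrow> eu A1 u (fst p) (snd p) = v"
  by (cases p) (auto simp: Vset_def)

lemma Vset_const:
  assumes "\<not> (\<exists>x\<in>Vset A1 A2 u1 u2 u. \<exists>y\<in>Vset A1 A2 u1 u2 u. x \<noteq> y)"
  obtains v where "\<And>p. p \<in> NashMP A1 A2 u1 u2 \<Longrightarrow> eu A1 u (fst p) (snd p) = v"
proof (cases "NashMP A1 A2 u1 u2 = {}")
  case False
  then obtain p0 where p0: "p0 \<in> NashMP A1 A2 u1 u2" by blast
  have "eu A1 u (fst p) (snd p) \<in> Vset A1 A2 u1 u2 u" if "p \<in> NashMP A1 A2 u1 u2" for p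
    using that by (cases p) (auto simp: Vset_def)
  with assms p0 show ?thesis by (intro that[of "eu A1 u (fst p0) (snd p0)"]) blast
qed simp

lemma Vset_singleton:
  assumes "\<not> (\<exists>x\<in>Vset A1 A2 u1 u2 u. \<exists>y\<in>Vset A1 A2 u1 u2 u. x \<noteq> y)"
    and "\<exists>x\<in>Vset A1 A2 u1 u2 u'. \<exists>y\<in>Vset A1 A2 u1 u2 u'. x \<noteq> y"
  shows "\<exists>v. Vset A1 A2 u1 u2 u = {v}"
proof -
  obtain \<sigma> b where "(\<sigma>, b) \<in> NashMP A1 A2 u1 u2" using assms(2) by (auto simp: Vset_def)
  then have "eu A1 u \<sigma> b \<in> Vset A1 A2 u1 u2 u" by (auto simp: Vset_def)
  with assms(1) show ?thesis by blast
qed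

definition Nash_differences :: "'a set \<Rightarrow> 'b set \<Rightarrow> ('a \<Rightarrow> 'b \<Rightarrow> real) \<Rightarrow> ('a \<Rightarrow> 'b \<Rightarrow> real) \<Rightarrow> real set" where
  "Nash_differences A1 A2 u1 u2 = {eu A1 u1 \<sigma>' b' - eu A1 u1 \<sigma>'' b'' | \<sigma>' b' \<sigma>'' b''.
     (\<sigma>', b') \<in> NashMP A1 A2 u1 u2 \<and> (\<sigma>'', b'') \<in> NashMP A1 A2 u1 u2}"

definition support_gaps_in_sums :: "'a set \<Rightarrow> ('a \<Rightarrow> 'b \<Rightarrow> real) \<Rightarrow> real set \<Rightarrow> ('a \<Rightarrow> real) \<Rightarrow> 'b \<Rightarrow> bool" where
  "support_gaps_in_sums A1 u1 D \<sigma> b \<longleftrightarrow>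
    (\<exists>a\<in>support A1 \<sigma>. \<forall>a''\<in>support A1 \<sigma> - {a}. \<exists>ds. set ds \<subseteq> D \<and> u1 a b - u1 a'' b = sum_list ds)"

lemma support_gaps_in_sums_if_card_le_1:
  assumes "finite A1" "\<sigma> \<in> mixed A1" "\<not> 1 < card (support A1 \<sigma>)"
  shows "support_gaps_in_sums A1 u1 D \<sigma> b"
proof -
  obtain a where a: "a \<in> support A1 \<sigma>" using support_nonempty[OF assms(1,2)] by blast
  have "finite (support A1 \<sigma>)" using assms(1) by (simp add: support_def)
  then have "support A1 \<sigma> - {a} = {}" using assms(3) a by (auto simp: card_le_Suc0_iff_eq not_less)
  then show ?thesis using a by (auto simp: support_gaps_in_sums_def)
qed

lemma Nash_differences_eq:
  "Nash_differences A1 A2 u1 u2 = {x - y | x y. x \<in> Vset A1 A2 u1 u2 u1 \<and> y \<in> Vset A1 A2 u1 u2 u1}"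
  by (auto simp: Nash_differences_def Vset_def)

section \<open>One-shot deviation principle\<close>

lemma hist_snoc: "hist A1 A2 (g @ [(a, b)]) \<longleftrightarrow> hist A1 A2 g \<and> a \<in> A1 \<and> b \<in> A2"
  by (auto simp: hist_def)

lemma rpay_cont: "rpay A u n (cont s1 g) (cont s2 g) g' = rpay A u n s1 s2 (g @ g')"
  by (induction n arbitrary: g') (simp_all add: cont_def)

lemma rpay_cong:
  assumes "\<And>g'. t1 (g @ g') = t1' (g @ g')" "\<And>g'. t2 (g @ g') = t2' (g @ g')"
  shows "rpay A u n t1 t2 g = rpay A u n t1' t2' g"
  using assms
proof (induction n arbitrary: g)
  case (Suc n)
  have "t1 g = t1' g" "t2 g = t2' g" using Suc.prems[of "[]"] by simp_all
  moreover have "rpay A u n t1 t2 (g @ [x]) = rpay A u n t1' t2' (g @ [x])" for x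
    by (rule Suc.IH) (metis Suc.prems append_assoc)+
  ultimately show ?case by simp
qed simp

lemma strat1_cont: "hist A1 A2 h \<Longrightarrow> strat1 A1 A2 T s \<Longrightarrow> strat1 A1 A2 (T - length h) (cont s h)"
  by (auto simp: strat1_def cont_def hist_def)

lemma strat2_cont: "hist A1 A2 h \<Longrightarrow> strat2 A1 A2 T s \<Longrightarrow> strat2 A1 A2 (T - length h) (cont s h)"
  by (auto simp: strat2_def cont_def hist_def)

lemma cont_drop: "cont (\<lambda>g. s (drop (length h) g)) h = s"
  by (simp add: cont_def)

lemma hist_drop: "hist A1 A2 g \<Longrightarrow> hist A1 A2 (drop k g)"
  by (meson hist_def order_trans set_drop_subset)

lemma subgame_history_drop:
  "hist A1 A2 g \<Longrightarrow> length g < T \<Longrightarrow> length h < T \<Longrightarrow>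
    hist A1 A2 (drop (length h) g) \<and> length (drop (length h) g) < T - length h"
  by (simp add: hist_drop)

lemma strat1_drop:
  "length h < T \<Longrightarrow> strat1 A1 A2 (T - length h) s \<Longrightarrow> strat1 A1 A2 T (\<lambda>g. s (drop (length h) g))"
  unfolding strat1_def by (metis subgame_history_drop)

lemma strat2_drop:
  "length h < T \<Longrightarrow> strat2 A1 A2 (T - length h) s \<Longrightarrow> strat2 A1 A2 T (\<lambda>g. s (drop (length h) g))"
  unfolding strat2_def by (metis subgame_history_drop)

lemma SPE_NashRep:
  "SPE A1 A2 u1 u2 T s1 s2 \<Longrightarrow> hist A1 A2 g \<Longrightarrow> length g < T \<Longrightarrow>
    NashRep A1 A2 u1 u2 (Suc (T - Suc (length g))) (cont s1 g) (cont s2 g)"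
  by (simp add: SPE_def Suc_diff_Suc)

lemma SPE_one_shot1:
  assumes spe: "SPE A1 A2 u1 u2 T s1 s2" and g: "hist A1 A2 g" "length g < T"
    and a: "a \<in> A1" and fin: "finite A1"
  shows "u1 a (s2 g) + rpay A1 u1 (T - Suc (length g)) s1 s2 (g @ [(a, s2 g)])
    \<le> rpay A1 u1 (T - length g) s1 s2 g"
proof -
  define m where "m = T - Suc (length g)"
  have Tm: "T - length g = Suc m" using g(2) by (simp add: m_def)
  define t1 where "t1 = (cont s1 g)([] := pure a)"
  have Nash: "NashRep A1 A2 u1 u2 (Suc m) (cont s1 g) (cont s2 g)"
    using SPE_NashRep[OF spe g] by (simp add: m_def)
  then have "strat1 A1 A2 (Suc m) t1"
    using pure_mixed[OF fin a] by (auto simp: NashRep_def strat1_def t1_def)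
  then have "payoff A1 u1 (Suc m) t1 (cont s2 g) \<le> payoff A1 u1 (Suc m) (cont s1 g) (cont s2 g)"
    using Nash by (simp add: NashRep_def)
  moreover have "rpay A1 u1 m t1 (cont s2 g) [(a, s2 g)] = rpay A1 u1 m (cont s1 g) (cont s2 g) [(a, s2 g)]"
    by (rule rpay_cong) (simp_all add: t1_def)
  ultimately show ?thesis
    using fin a by (simp add: payoff_def t1_def sum_pure rpay_cont Tm m_def[symmetric]) (simp add: cont_def)
qed

lemma SPE_one_shot2:
  assumes spe: "SPE A1 A2 u1 u2 T s1 s2" and g: "hist A1 A2 g" "length g < T" and b: "b \<in> A2"
  shows "(\<Sum>a\<in>A1. s1 g a * (u2 a b + rpay A1 u2 (T - Suc (length g)) s1 s2 (g @ [(a, b)])))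
    \<le> rpay A1 u2 (T - length g) s1 s2 g"
proof -
  define m where "m = T - Suc (length g)"
  have Tm: "T - length g = Suc m" using g(2) by (simp add: m_def)
  define t2 where "t2 = (cont s2 g)([] := b)"
  have Nash: "NashRep A1 A2 u1 u2 (Suc m) (cont s1 g) (cont s2 g)"
    using SPE_NashRep[OF spe g] by (simp add: m_def)
  then have "strat2 A1 A2 (Suc m) t2"
    using b by (auto simp: NashRep_def strat2_def t2_def)
  then have "payoff A1 u2 (Suc m) (cont s1 g) t2 \<le> payoff A1 u2 (Suc m) (cont s1 g) (cont s2 g)"
    using Nash by (simp add: NashRep_def)
  moreover have "rpay A1 u2 m (cont s1 g) t2 [(x, b)] = rpay A1 u2 m (cont s1 g) (cont s2 g) [(x, b)]" for x
    by (rule rpay_cong) (simp_all add: t2_def)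
  ultimately show ?thesis
    by (simp add: payoff_def t2_def rpay_cont Tm m_def[symmetric]) (simp add: cont_def)
qed

lemma rpay_deviation1_le:
  assumes fin: "finite A1" and s2: "strat2 A1 A2 T s2" and s1': "strat1 A1 A2 T s1'"
    and one_shot: "\<And>g a. hist A1 A2 g \<Longrightarrow> length g < T \<Longrightarrow> a \<in> A1 \<Longrightarrow>
      u1 a (s2 g) + rpay A1 u1 (T - Suc (length g)) s1 s2 (g @ [(a, s2 g)]) \<le> rpay A1 u1 (T - length g) s1 s2 g"
  shows "hist A1 A2 g \<Longrightarrow> length g + m = T \<Longrightarrow> rpay A1 u1 m s1' s2 g \<le> rpay A1 u1 m s1 s2 g"
proof (induction m arbitrary: g)
  case (Suc m)
  define b where "b = s2 g"
  have g: "length g < T" "T - length g = Suc m" "T - Suc (length g) = m" using Suc.prems by auto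
  have b: "b \<in> A2" and \<sigma>: "s1' g \<in> mixed A1"
    using s2 s1' Suc.prems g by (auto simp: strat1_def strat2_def b_def)
  have "rpay A1 u1 (Suc m) s1' s2 g = (\<Sum>a\<in>A1. s1' g a * (u1 a b + rpay A1 u1 m s1' s2 (g @ [(a, b)])))"
    by (simp add: b_def)
  also have "\<dots> \<le> (\<Sum>a\<in>A1. s1' g a * (u1 a b + rpay A1 u1 m s1 s2 (g @ [(a, b)])))"
    by (rule sum_mixed_mono[OF \<sigma>]) (use Suc b in \<open>simp add: hist_snoc\<close>)
  also have "\<dots> \<le> (\<Sum>a\<in>A1. s1' g a * rpay A1 u1 (Suc m) s1 s2 g)"
    by (rule sum_mixed_mono[OF \<sigma>]) (use one_shot[OF Suc.prems(1) g(1)] g in \<open>simp add: b_def\<close>)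
  also have "\<dots> = rpay A1 u1 (Suc m) s1 s2 g"
    by (rule sum_mixed_const[OF \<sigma>])
  finally show ?case .
qed simp

lemma rpay_deviation2_le:
  assumes s1: "strat1 A1 A2 T s1" and s2': "strat2 A1 A2 T s2'"
    and one_shot: "\<And>g b. hist A1 A2 g \<Longrightarrow> length g < T \<Longrightarrow> b \<in> A2 \<Longrightarrow>
      (\<Sum>a\<in>A1. s1 g a * (u2 a b + rpay A1 u2 (T - Suc (length g)) s1 s2 (g @ [(a, b)])))
        \<le> rpay A1 u2 (T - length g) s1 s2 g"
  shows "hist A1 A2 g \<Longrightarrow> length g + m = T \<Longrightarrow> rpay A1 u2 m s1 s2' g \<le> rpay A1 u2 m s1 s2 g"
proof (induction m arbitrary: g)
  case (Suc m)
  define b where "b = s2' g"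
  have g: "length g < T" "T - length g = Suc m" "T - Suc (length g) = m" using Suc.prems by auto
  have b: "b \<in> A2" and \<sigma>: "s1 g \<in> mixed A1"
    using s1 s2' Suc.prems g by (auto simp: strat1_def strat2_def b_def)
  have "rpay A1 u2 (Suc m) s1 s2' g = (\<Sum>a\<in>A1. s1 g a * (u2 a b + rpay A1 u2 m s1 s2' (g @ [(a, b)])))"
    by (simp add: b_def)
  also have "\<dots> \<le> (\<Sum>a\<in>A1. s1 g a * (u2 a b + rpay A1 u2 m s1 s2 (g @ [(a, b)])))"
    by (rule sum_mixed_mono[OF \<sigma>]) (use Suc b in \<open>simp add: hist_snoc\<close>)
  also have "\<dots> \<le> rpay A1 u2 (Suc m) s1 s2 g"
    using one_shot[OF Suc.prems(1) g(1) b] g by simp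
  finally show ?case .
qed simp

lemma SPE_if_one_shot:
  assumes fin: "finite A1" and s1: "strat1 A1 A2 T s1" and s2: "strat2 A1 A2 T s2"
    and one_shot1: "\<And>g a. hist A1 A2 g \<Longrightarrow> length g < T \<Longrightarrow> a \<in> A1 \<Longrightarrow>
      u1 a (s2 g) + rpay A1 u1 (T - Suc (length g)) s1 s2 (g @ [(a, s2 g)]) \<le> rpay A1 u1 (T - length g) s1 s2 g"
    and one_shot2: "\<And>g b. hist A1 A2 g \<Longrightarrow> length g < T \<Longrightarrow> b \<in> A2 \<Longrightarrow>
      (\<Sum>a\<in>A1. s1 g a * (u2 a b + rpay A1 u2 (T - Suc (length g)) s1 s2 (g @ [(a, b)])))
        \<le> rpay A1 u2 (T - length g) s1 s2 g"
  shows "SPE A1 A2 u1 u2 T s1 s2"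
  unfolding SPE_def
proof (intro conjI s1 s2 allI impI)
  fix h assume h: "hist A1 A2 h \<and> length h < T"
  have h_len: "length h + (T - length h) = T" using h by simp
  txt \<open>A deviation \<open>s'\<close> in the subgame after \<open>h\<close> is the continuation of the deviation
    \<open>\<lambda>g. s' (drop (length h) g)\<close> of the whole game.\<close>
  have "payoff A1 u1 (T - length h) s1' (cont s2 h) \<le> payoff A1 u1 (T - length h) (cont s1 h) (cont s2 h)"
    if "strat1 A1 A2 (T - length h) s1'" for s1'
    using rpay_deviation1_le[OF fin s2 strat1_drop[OF _ that] one_shot1] h h_len
      rpay_cont[of A1 u1 _ "\<lambda>g. s1' (drop (length h) g)" h s2 "[]"]
    by (simp add: payoff_def rpay_cont cont_drop)
  moreover have "payoff A1 u2 (T - length h) (cont s1 h) s2' \<le> payoff A1 u2 (T - length h) (cont s1 h) (cont s2 h)"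
    if "strat2 A1 A2 (T - length h) s2'" for s2'
    using rpay_deviation2_le[OF s1 strat2_drop[OF _ that] one_shot2] h h_len
      rpay_cont[of A1 u2 _ s1 h "\<lambda>g. s2' (drop (length h) g)" "[]"]
    by (simp add: payoff_def rpay_cont cont_drop)
  ultimately show "NashRep A1 A2 u1 u2 (T - length h) (cont s1 h) (cont s2 h)"
    using h s1 s2 by (simp add: NashRep_def strat1_cont strat2_cont)
qed

section \<open>Strategies following prescribed equilibrium paths\<close>

definition path_value :: "'a set \<Rightarrow> ('a \<Rightarrow> 'b \<Rightarrow> real) \<Rightarrow> (('a \<Rightarrow> real) \<times> 'b) list \<Rightarrow> real" where
  "path_value A u xs = (\<Sum>p\<leftarrow>xs. eu A u (fst p) (snd p))"

lemma path_value_simps [simp]: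
  "path_value A u [] = 0"
  "path_value A u (p # xs) = eu A u (fst p) (snd p) + path_value A u xs"
  "path_value A u (xs @ ys) = path_value A u xs + path_value A u ys"
  "path_value A u (replicate k p) = real k * eu A u (fst p) (snd p)"
  by (simp_all add: path_value_def sum_list_replicate)

lemma path_value_const:
  "set xs \<subseteq> S \<Longrightarrow> (\<And>p. p \<in> S \<Longrightarrow> eu A u (fst p) (snd p) = v) \<Longrightarrow>
    path_value A u xs = real (length xs) * v"
  by (induction xs) (simp_all add: algebra_simps)

text \<open>Play \<open>\<sigma>\<close> against \<open>b\<close> in the first round; if its outcome is \<open>x\<close>, play the profiles of the
  list \<open>L x\<close> in the remaining rounds, regardless of what happens there.\<close>
definition path_strat1 :: "('a \<Rightarrow> real) \<Rightarrow> ('a \<times> 'b \<Rightarrow> (('a \<Rightarrow> real) \<times> 'b) list) \<Rightarrow> ('a \<times> 'b) list \<Rightarrow> 'a \<Rightarrow> real" where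
  "path_strat1 \<sigma> L g = (if g = [] then \<sigma> else fst (L (hd g) ! (length g - 1)))"

definition path_strat2 :: "'b \<Rightarrow> ('a \<times> 'b \<Rightarrow> (('a \<Rightarrow> real) \<times> 'b) list) \<Rightarrow> ('a \<times> 'b) list \<Rightarrow> 'b" where
  "path_strat2 b L g = (if g = [] then b else snd (L (hd g) ! (length g - 1)))"

definition has_suboptimal_SPE :: "'a set \<Rightarrow> 'b set \<Rightarrow> ('a \<Rightarrow> 'b \<Rightarrow> real) \<Rightarrow> ('a \<Rightarrow> 'b \<Rightarrow> real) \<Rightarrow> bool" where
  "has_suboptimal_SPE A1 A2 u1 u2 \<longleftrightarrow>
    (\<exists>T::nat. 0 < T \<and> (\<exists>s1 s2. SPE A1 A2 u1 u2 T s1 s2 \<and> locally_suboptimal A1 A2 u1 u2 T s1 s2))"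

context
  fixes A1 :: "'a set" and A2 :: "'b set" and u1 u2 :: "'a \<Rightarrow> 'b \<Rightarrow> real"
    and L :: "'a \<times> 'b \<Rightarrow> (('a \<Rightarrow> real) \<times> 'b) list" and n :: nat
  assumes L_length: "\<And>x. length (L x) = n" and L_Nash: "\<And>x. set (L x) \<subseteq> NashMP A1 A2 u1 u2"
begin

lemma path_profile_Nash:
  assumes "g \<noteq> []" "length g < Suc n"
  shows "L (hd g) ! (length g - 1) \<in> NashMP A1 A2 u1 u2"
proof -
  have "length g - 1 < length (L (hd g))" using assms by (cases g) (auto simp: L_length)
  then show ?thesis using L_Nash nth_mem by blast
qed

lemma path_drop_Cons:
  assumes "g \<noteq> []" "length g < Suc n"
  shows "drop (length g - 1) (L (hd g)) = L (hd g) ! (length g - 1) # drop (length g) (L (hd g))"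
proof -
  have "length g - 1 < length (L (hd g))" using assms by (cases g) (auto simp: L_length)
  then show ?thesis using assms(1) Cons_nth_drop_Suc[of "length g - 1" "L (hd g)"] by simp
qed

lemma rpay_path_strats:
  "g \<noteq> [] \<Longrightarrow> length g + m = Suc n \<Longrightarrow>
    rpay A1 u m (path_strat1 \<sigma> L) (path_strat2 b L) g = path_value A1 u (drop (length g - 1) (L (hd g)))"
proof (induction m arbitrary: g)
  case 0
  then show ?case using L_length[of "hd g"] by simp
next
  case (Suc m)
  define p where "p = L (hd g) ! (length g - 1)"
  have g: "g \<noteq> []" "length g < Suc n" using Suc.prems by auto
  have p: "fst p \<in> mixed A1" using path_profile_Nash[OF g] by (simp add: p_def mem_NashMP_iff)
  have "drop (length g - 1) (L (hd g)) = p # drop (length g) (L (hd g))"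
    using path_drop_Cons[OF g] by (simp add: p_def)
  moreover have "rpay A1 u m (path_strat1 \<sigma> L) (path_strat2 b L) (g @ [(a, snd p)])
      = path_value A1 u (drop (length g) (L (hd g)))" for a
    using Suc.IH[of "g @ [(a, snd p)]"] Suc.prems by (simp add: hd_append)
  moreover have "path_strat1 \<sigma> L g = fst p" "path_strat2 b L g = snd p"
    using Suc.prems by (simp_all add: path_strat1_def path_strat2_def p_def)
  ultimately show ?case
    using sum_mixed_plus_const[OF p] by (simp add: eu_def)
qed

lemma rpay_path_strats_split:
  fixes u :: "'a \<Rightarrow> 'b \<Rightarrow> real"
  assumes "g \<noteq> []" "length g < Suc n"
  defines "p \<equiv> L (hd g) ! (length g - 1)" and "C \<equiv> path_value A1 u (drop (length g) (L (hd g)))"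
  shows "rpay A1 u (Suc n - Suc (length g)) (path_strat1 \<sigma> L) (path_strat2 b L) (g @ [x]) = C"
    and "rpay A1 u (Suc n - length g) (path_strat1 \<sigma> L) (path_strat2 b L) g = eu A1 u (fst p) (snd p) + C"
proof -
  show "rpay A1 u (Suc n - Suc (length g)) (path_strat1 \<sigma> L) (path_strat2 b L) (g @ [x]) = C"
    using rpay_path_strats[of "g @ [x]"] assms by (simp add: hd_append)
  have "drop (length g - 1) (L (hd g)) = p # drop (length g) (L (hd g))"
    using path_drop_Cons[OF assms(1,2)] by (simp add: p_def)
  then show "rpay A1 u (Suc n - length g) (path_strat1 \<sigma> L) (path_strat2 b L) g = eu A1 u (fst p) (snd p) + C"
    using rpay_path_strats[of g] assms by (simp add: C_def)
qed

lemma SPE_path_strats: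
  assumes fin: "finite A1" and \<sigma>: "\<sigma> \<in> mixed A1" and b0: "b0 \<in> A2"
    and first1: "\<And>a. a \<in> A1 \<Longrightarrow> u1 a b0 + path_value A1 u1 (L (a, b0))
      \<le> (\<Sum>x\<in>A1. \<sigma> x * (u1 x b0 + path_value A1 u1 (L (x, b0))))"
    and first2: "\<And>b. b \<in> A2 \<Longrightarrow> (\<Sum>x\<in>A1. \<sigma> x * (u2 x b + path_value A1 u2 (L (x, b))))
      \<le> (\<Sum>x\<in>A1. \<sigma> x * (u2 x b0 + path_value A1 u2 (L (x, b0))))"
  shows "SPE A1 A2 u1 u2 (Suc n) (path_strat1 \<sigma> L) (path_strat2 b0 L)"
proof (rule SPE_if_one_shot[OF fin])
  have Nash: "L (hd g) ! (length g - 1) \<in> NashMP A1 A2 u1 u2" if "g \<noteq> []" "length g < Suc n" for g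
    using path_profile_Nash that .
  show "strat1 A1 A2 (Suc n) (path_strat1 \<sigma> L)" "strat2 A1 A2 (Suc n) (path_strat2 b0 L)"
    using \<sigma> b0 Nash by (auto simp: strat1_def strat2_def path_strat1_def path_strat2_def mem_NashMP_iff)
  have first_round: "rpay A1 u n (path_strat1 \<sigma> L) (path_strat2 b0 L) [x] = path_value A1 u (L x)" for u x
    using rpay_path_strats[of "[x]" n] by simp
  fix g assume g: "hist A1 A2 g" "length g < Suc n"
  show "u1 a (path_strat2 b0 L g) + rpay A1 u1 (Suc n - Suc (length g)) (path_strat1 \<sigma> L) (path_strat2 b0 L)
      (g @ [(a, path_strat2 b0 L g)]) \<le> rpay A1 u1 (Suc n - length g) (path_strat1 \<sigma> L) (path_strat2 b0 L) g"
    if a: "a \<in> A1" for a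
  proof (cases "g = []")
    case True
    then show ?thesis using first1[OF a] by (simp add: first_round path_strat1_def path_strat2_def)
  next
    case False
    then show ?thesis
      using rpay_path_strats_split[OF False g(2)] Nash[OF False g(2)] a fin
      by (simp add: path_strat2_def mem_NashMP_iff br1_iff_pure)
  qed
  show "(\<Sum>x\<in>A1. path_strat1 \<sigma> L g x * (u2 x b + rpay A1 u2 (Suc n - Suc (length g)) (path_strat1 \<sigma> L)
      (path_strat2 b0 L) (g @ [(x, b)]))) \<le> rpay A1 u2 (Suc n - length g) (path_strat1 \<sigma> L) (path_strat2 b0 L) g"
    if b: "b \<in> A2" for b
  proof (cases "g = []")
    case True
    then show ?thesis using first2[OF b] by (simp add: first_round path_strat1_def path_strat2_def)
  next
    case False
    define p where "p = L (hd g) ! (length g - 1)"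
    have p: "fst p \<in> mixed A1" "br2 A1 A2 u2 (fst p) (snd p)"
      using Nash[OF False g(2)] by (simp_all add: p_def mem_NashMP_iff)
    have "path_strat1 \<sigma> L g = fst p" using False by (simp add: path_strat1_def p_def)
    then show ?thesis
      using rpay_path_strats_split[OF False g(2), folded p_def] b sum_mixed_plus_const[OF p(1)] p(2)
      by (simp add: eu_def[symmetric] br2_def)
  qed
qed

lemma has_suboptimal_SPE_if_path_strats:
  assumes "finite A1" "\<sigma> \<in> mixed A1" "b0 \<in> A2" "(\<sigma>, b0) \<notin> NashMP A1 A2 u1 u2"
    and "\<And>a. a \<in> A1 \<Longrightarrow> u1 a b0 + path_value A1 u1 (L (a, b0))
      \<le> (\<Sum>x\<in>A1. \<sigma> x * (u1 x b0 + path_value A1 u1 (L (x, b0))))"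
    and "\<And>b. b \<in> A2 \<Longrightarrow> (\<Sum>x\<in>A1. \<sigma> x * (u2 x b + path_value A1 u2 (L (x, b))))
      \<le> (\<Sum>x\<in>A1. \<sigma> x * (u2 x b0 + path_value A1 u2 (L (x, b0))))"
  shows "has_suboptimal_SPE A1 A2 u1 u2"
proof -
  have "locally_suboptimal A1 A2 u1 u2 (Suc n) (path_strat1 \<sigma> L) (path_strat2 b0 L)"
    using assms(4) unfolding locally_suboptimal_def
    by (intro exI[of _ "[]"]) (simp add: hist_def path_strat1_def path_strat2_def)
  then show ?thesis
    using SPE_path_strats[OF assms(1-3,5,6)] unfolding has_suboptimal_SPE_def by blast
qed

end

section \<open>Sufficiency\<close>

lemma ex_nat_mult_bound:
  fixes f :: "'c \<Rightarrow> real"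
  assumes "finite A" "0 < d"
  shows "\<exists>K::nat. \<forall>K'\<ge>K. \<forall>x\<in>A. f x \<le> real K' * d"
proof -
  obtain K :: nat where K: "(\<Sum>x\<in>A. \<bar>f x\<bar>) < real K * d"
    using ex_less_of_nat_mult[OF assms(2)] by blast
  have "f x \<le> real K' * d" if "K \<le> K'" "x \<in> A" for K' x
  proof -
    have "f x \<le> (\<Sum>x\<in>A. \<bar>f x\<bar>)"
      using member_le_sum[of x A "\<lambda>x. \<bar>f x\<bar>"] that assms(1) by simp
    also have "\<dots> < real K * d" by (rule K)
    also have "\<dots> \<le> real K' * d"
      by (rule mult_right_mono) (use that assms(2) in auto)
    finally show ?thesis by simp
  qed
  then show ?thesis by blast
qed

lemma has_suboptimal_SPE_if_both_vary:
  assumes fin: "finite A1" "finite A2"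
    and V1: "\<exists>x\<in>Vset A1 A2 u1 u2 u1. \<exists>y\<in>Vset A1 A2 u1 u2 u1. x \<noteq> y"
    and V2: "\<exists>x\<in>Vset A1 A2 u1 u2 u2. \<exists>y\<in>Vset A1 A2 u1 u2 u2. x \<noteq> y"
    and \<sigma>: "\<sigma> \<in> mixed A1" and b: "b \<in> A2" and not_Nash_\<sigma>: "(\<sigma>, b) \<notin> NashMP A1 A2 u1 u2"
  shows "has_suboptimal_SPE A1 A2 u1 u2"
proof -
  obtain a0 b0 where a0: "a0 \<in> A1" and b0: "b0 \<in> A2" and not_Nash: "(pure a0, b0) \<notin> NashMP A1 A2 u1 u2"
    using NashMP_if_pure_NashMP[OF fin(1) \<sigma> b] not_Nash_\<sigma> by blast
  obtain p1 q1 where Nash1: "p1 \<in> NashMP A1 A2 u1 u2" "q1 \<in> NashMP A1 A2 u1 u2"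
    and less1: "eu A1 u1 (fst q1) (snd q1) < eu A1 u1 (fst p1) (snd p1)"
    using Vset_two_values[OF V1] .
  obtain p2 q2 where Nash2: "p2 \<in> NashMP A1 A2 u1 u2" "q2 \<in> NashMP A1 A2 u1 u2"
    and less2: "eu A1 u2 (fst q2) (snd q2) < eu A1 u2 (fst p2) (snd p2)"
    using Vset_two_values[OF V2] .
  define e1 where "e1 p = eu A1 u1 (fst p) (snd p)" for p
  define e2 where "e2 p = eu A1 u2 (fst p) (snd p)" for p
  obtain K1 where K1: "\<And>K'. K1 \<le> K' \<Longrightarrow> \<forall>a\<in>A1. u1 a b0 - u1 a0 b0 \<le> real K' * (e1 p1 - e1 q1)"
    using ex_nat_mult_bound[of A1 "e1 p1 - e1 q1" "\<lambda>a. u1 a b0 - u1 a0 b0"] fin less1 by (auto simp: e1_def)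
  obtain K2 where K2: "\<And>K'. K2 \<le> K' \<Longrightarrow> \<forall>b\<in>A2. u2 a0 b - u2 a0 b0 \<le> real K' * (e2 p2 - e2 q2)"
    using ex_nat_mult_bound[of A2 "e2 p2 - e2 q2" "\<lambda>b. u2 a0 b - u2 a0 b0"] fin less2 by (auto simp: e2_def)
  define K where "K = max K1 K2"
  txt \<open>Playing \<open>a0\<close> earns player 1 the block \<open>p1\<close> instead of \<open>q1\<close>; playing \<open>b0\<close> earns player 2
    the block \<open>p2\<close> instead of \<open>q2\<close>.\<close>
  define L where "L x = replicate K (if fst x = a0 then p1 else q1) @ replicate K (if snd x = b0 then p2 else q2)"
    for x :: "'a \<times> 'b"
  have "u1 a b0 + path_value A1 u1 (L (a, b0)) \<le> u1 a0 b0 + path_value A1 u1 (L (a0, b0))" if "a \<in> A1" for a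
    using K1[of K] that by (cases "a = a0") (simp_all add: L_def K_def e1_def algebra_simps)
  moreover have "u2 a0 b + path_value A1 u2 (L (a0, b)) \<le> u2 a0 b0 + path_value A1 u2 (L (a0, b0))" if "b \<in> A2" for b
    using K2[of K] that by (cases "b = b0") (simp_all add: L_def K_def e2_def algebra_simps)
  moreover have "length (L x) = K + K" "set (L x) \<subseteq> NashMP A1 A2 u1 u2" for x
    using Nash1 Nash2 by (auto simp: L_def)
  ultimately show ?thesis
    using has_suboptimal_SPE_if_path_strats[of L "K + K" A1 A2 u1 u2, OF _ _ fin(1) pure_mixed[OF fin(1) a0] b0 not_Nash]
    by (simp add: sum_pure[OF fin(1) a0])
qed

lemma has_suboptimal_SPE_if_V1_const:
  assumes fin: "finite A1" "finite A2"
    and V1: "Vset A1 A2 u1 u2 u1 = {v}"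
    and V2: "\<exists>x\<in>Vset A1 A2 u1 u2 u2. \<exists>y\<in>Vset A1 A2 u1 u2 u2. x \<noteq> y"
    and \<sigma>: "\<sigma> \<in> mixed A1" and b: "b0 \<in> A2" "b1 \<in> A2"
    and gain2: "eu A1 u2 \<sigma> b0 < eu A1 u2 \<sigma> b1" and br1: "br1 A1 u1 \<sigma> b0"
  shows "has_suboptimal_SPE A1 A2 u1 u2"
proof -
  obtain p2 q2 where Nash: "p2 \<in> NashMP A1 A2 u1 u2" "q2 \<in> NashMP A1 A2 u1 u2"
    and less2: "eu A1 u2 (fst q2) (snd q2) < eu A1 u2 (fst p2) (snd p2)"
    using Vset_two_values[OF V2] .
  define e2 where "e2 p = eu A1 u2 (fst p) (snd p)" for p
  obtain K where K: "\<forall>b\<in>A2. eu A1 u2 \<sigma> b - eu A1 u2 \<sigma> b0 \<le> real K * (e2 p2 - e2 q2)"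
    using ex_nat_mult_bound[of A2 "e2 p2 - e2 q2" "\<lambda>b. eu A1 u2 \<sigma> b - eu A1 u2 \<sigma> b0"] fin less2
    by (auto simp: e2_def)
  define L where "L x = replicate K (if snd x = b0 then p2 else q2)" for x :: "'a \<times> 'b"
  have L: "length (L x) = K" "set (L x) \<subseteq> NashMP A1 A2 u1 u2" for x
    using Nash by (auto simp: L_def)
  have not_Nash: "(\<sigma>, b0) \<notin> NashMP A1 A2 u1 u2"
    using gain2 b by (force simp: NashMP_def br2_def)
  have u1_path: "path_value A1 u1 (L x) = real K * v" for x
    using path_value_const[OF L(2) Vset_singletonD[OF V1]] L(1) by simp
  have u2_first: "(\<Sum>x\<in>A1. \<sigma> x * (u2 x b + path_value A1 u2 (L (x, b))))
      = eu A1 u2 \<sigma> b + real K * e2 (if b = b0 then p2 else q2)" for b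
    by (simp add: L_def e2_def eu_def sum_mixed_plus_const[OF \<sigma>])
  show ?thesis
  proof (rule has_suboptimal_SPE_if_path_strats[OF L fin(1) \<sigma> b(1) not_Nash])
    show "u1 a b0 + path_value A1 u1 (L (a, b0)) \<le> (\<Sum>x\<in>A1. \<sigma> x * (u1 x b0 + path_value A1 u1 (L (x, b0))))"
      if "a \<in> A1" for a
      using br1 that fin(1) by (simp add: u1_path sum_mixed_plus_const[OF \<sigma>] eu_def[symmetric] br1_iff_pure)
    show "(\<Sum>x\<in>A1. \<sigma> x * (u2 x b + path_value A1 u2 (L (x, b))))
        \<le> (\<Sum>x\<in>A1. \<sigma> x * (u2 x b0 + path_value A1 u2 (L (x, b0))))" if "b \<in> A2" for b
      using K that unfolding u2_first by (cases "b = b0") (simp_all add: algebra_simps)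
  qed
qed

lemma Nash_difference_paths:
  assumes "set ds \<subseteq> Nash_differences A1 A2 u1 u2"
  shows "\<exists>P Q. length P = length Q \<and> set P \<subseteq> NashMP A1 A2 u1 u2 \<and> set Q \<subseteq> NashMP A1 A2 u1 u2 \<and>
    path_value A1 u1 P = path_value A1 u1 Q + sum_list ds"
  using assms
proof (induction ds)
  case Nil
  show ?case by (intro exI[of _ "[]"]) simp
next
  case (Cons d ds)
  obtain P Q where PQ: "length P = length Q" "set P \<subseteq> NashMP A1 A2 u1 u2" "set Q \<subseteq> NashMP A1 A2 u1 u2"
    "path_value A1 u1 P = path_value A1 u1 Q + sum_list ds"
    using Cons by auto
  obtain \<sigma>' b' \<sigma>'' b'' where d: "d = eu A1 u1 \<sigma>' b' - eu A1 u1 \<sigma>'' b''"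
    "(\<sigma>', b') \<in> NashMP A1 A2 u1 u2" "(\<sigma>'', b'') \<in> NashMP A1 A2 u1 u2"
    using Cons.prems by (auto simp: Nash_differences_def)
  show ?case
    by (rule exI[of _ "(\<sigma>', b') # P"], rule exI[of _ "(\<sigma>'', b'') # Q"]) (use PQ d in simp)
qed

lemma selective_Nash_paths:
  assumes "finite C"
    and "\<forall>c\<in>C. \<exists>ds. set ds \<subseteq> Nash_differences A1 A2 u1 u2 \<and> r c = sum_list ds"
  shows "\<exists>n W L. \<forall>y. length (L y) = n \<and> set (L y) \<subseteq> NashMP A1 A2 u1 u2 \<and>
    path_value A1 u1 (L y) = W + (if y \<in> C then r y else 0)"
  using assms
proof (induction C rule: finite_induct)
  case empty
  show ?case by (intro exI[of _ 0] exI[of _ 0] exI[of _ "\<lambda>_. []"]) simp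
next
  case (insert c C)
  obtain n W L where L: "\<forall>y. length (L y) = n \<and> set (L y) \<subseteq> NashMP A1 A2 u1 u2 \<and>
      path_value A1 u1 (L y) = W + (if y \<in> C then r y else 0)"
    using insert by auto
  obtain ds where "set ds \<subseteq> Nash_differences A1 A2 u1 u2" "r c = sum_list ds"
    using insert.prems by auto
  then obtain P Q where PQ: "length P = length Q" "set P \<subseteq> NashMP A1 A2 u1 u2" "set Q \<subseteq> NashMP A1 A2 u1 u2"
    "path_value A1 u1 P = path_value A1 u1 Q + r c"
    using Nash_difference_paths by metis
  define L' where "L' y = (if y = c then P else Q) @ L y" for y
  have "\<forall>y. length (L' y) = length Q + n \<and> set (L' y) \<subseteq> NashMP A1 A2 u1 u2 \<and>
      path_value A1 u1 (L' y) = (path_value A1 u1 Q + W) + (if y \<in> insert c C then r y else 0)"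
    using L PQ insert.hyps(2) by (auto simp: L'_def)
  then show ?case by blast
qed

lemma support_equalizing_paths:
  assumes fin: "finite A1" and \<sigma>: "\<sigma> \<in> mixed A1"
    and V1: "\<exists>x\<in>Vset A1 A2 u1 u2 u1. \<exists>y\<in>Vset A1 A2 u1 u2 u1. x \<noteq> y"
    and gaps: "support_gaps_in_sums A1 u1 (Nash_differences A1 A2 u1 u2) \<sigma> b0"
  obtains n L where "\<And>y. length (L y) = n" "\<And>y. set (L y) \<subseteq> NashMP A1 A2 u1 u2"
    "\<And>y. y \<in> A1 \<Longrightarrow> u1 y b0 + path_value A1 u1 (L y) \<le> (\<Sum>x\<in>A1. \<sigma> x * (u1 x b0 + path_value A1 u1 (L x)))"
proof -
  obtain p1 q1 where Nash: "p1 \<in> NashMP A1 A2 u1 u2" "q1 \<in> NashMP A1 A2 u1 u2"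
    and less1: "eu A1 u1 (fst q1) (snd q1) < eu A1 u1 (fst p1) (snd p1)"
    using Vset_two_values[OF V1] .
  obtain a where a: "a \<in> support A1 \<sigma>" and gaps_a: "\<forall>c\<in>support A1 \<sigma> - {a}.
      \<exists>ds. set ds \<subseteq> Nash_differences A1 A2 u1 u2 \<and> u1 a b0 - u1 c b0 = sum_list ds"
    using gaps unfolding support_gaps_in_sums_def by blast
  define S where "S = support A1 \<sigma>"
  define e1 where "e1 p = eu A1 u1 (fst p) (snd p)" for p
  have "finite (S - {a})" using fin by (simp add: S_def support_def)
  then obtain n W M where M: "\<And>y. length (M y) = n" "\<And>y. set (M y) \<subseteq> NashMP A1 A2 u1 u2"
    "\<And>y. path_value A1 u1 (M y) = W + (if y \<in> S - {a} then u1 a b0 - u1 y b0 else 0)"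
    using selective_Nash_paths[of "S - {a}" A1 A2 u1 u2 "\<lambda>y. u1 a b0 - u1 y b0"] gaps_a
    unfolding S_def by metis
  obtain K where K: "\<forall>y\<in>A1. u1 y b0 - u1 a b0 \<le> real K * (e1 p1 - e1 q1)"
    using ex_nat_mult_bound[of A1 "e1 p1 - e1 q1" "\<lambda>y. u1 y b0 - u1 a b0"] fin less1
    by (auto simp: e1_def)
  txt \<open>The paths \<open>M\<close> make player 1 indifferent on \<open>S\<close>; the final \<open>K\<close> rounds punish leaving \<open>S\<close>.\<close>
  define L where "L y = M y @ replicate K (if y \<in> S then p1 else q1)" for y
  define c where "c = u1 a b0 + W + real K * e1 p1"
  have value1: "u1 y b0 + path_value A1 u1 (L y) = (if y \<in> S then c else u1 y b0 + W + real K * e1 q1)" for y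
    using a by (auto simp: L_def M(3) c_def e1_def S_def)
  have mean: "(\<Sum>x\<in>A1. \<sigma> x * (u1 x b0 + path_value A1 u1 (L x))) = c"
    by (rule sum_mixed_support_const[OF \<sigma>]) (simp add: value1 S_def)
  have le: "u1 y b0 + path_value A1 u1 (L y) \<le> c" if "y \<in> A1" for y
    using K that by (simp add: value1 c_def algebra_simps)
  have "length (L y) = n + K" "set (L y) \<subseteq> NashMP A1 A2 u1 u2" for y
    using M Nash by (auto simp: L_def)
  with le show ?thesis by (intro that[of L "n + K"]) (simp_all only: mean)
qed

lemma has_suboptimal_SPE_if_V2_const:
  assumes fin: "finite A1" "finite A2"
    and V1: "\<exists>x\<in>Vset A1 A2 u1 u2 u1. \<exists>y\<in>Vset A1 A2 u1 u2 u1. x \<noteq> y"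
    and V2: "Vset A1 A2 u1 u2 u2 = {v}"
    and \<sigma>: "\<sigma> \<in> mixed A1" and a': "a' \<in> A1" and b0: "b0 \<in> A2"
    and gain1: "eu A1 u1 \<sigma> b0 < u1 a' b0" and br2: "br2 A1 A2 u2 \<sigma> b0"
    and gaps: "1 < card (support A1 \<sigma>) \<longrightarrow> support_gaps_in_sums A1 u1 (Nash_differences A1 A2 u1 u2) \<sigma> b0"
  shows "has_suboptimal_SPE A1 A2 u1 u2"
proof -
  have "support_gaps_in_sums A1 u1 (Nash_differences A1 A2 u1 u2) \<sigma> b0"
    using gaps support_gaps_in_sums_if_card_le_1[OF fin(1) \<sigma>] by metis
  then show ?thesis
  proof (rule support_equalizing_paths[OF fin(1) \<sigma> V1])
    fix n M
    assume M: "\<And>y. length (M y) = n" "\<And>y. set (M y) \<subseteq> NashMP A1 A2 u1 u2"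
      "\<And>y. y \<in> A1 \<Longrightarrow> u1 y b0 + path_value A1 u1 (M y) \<le> (\<Sum>x\<in>A1. \<sigma> x * (u1 x b0 + path_value A1 u1 (M x)))"
    define L where "L x = M (fst x)" for x :: "'a \<times> 'b"
    have L: "length (L x) = n" "set (L x) \<subseteq> NashMP A1 A2 u1 u2" for x
      using M by (simp_all add: L_def)
    have not_Nash: "(\<sigma>, b0) \<notin> NashMP A1 A2 u1 u2"
      using gain1 a' fin(1) by (force simp: NashMP_def br1_iff_pure)
    have u2_path: "path_value A1 u2 (L x) = real n * v" for x
      using path_value_const[OF L(2) Vset_singletonD[OF V2]] L(1) by simp
    show ?thesis
    proof (rule has_suboptimal_SPE_if_path_strats[OF L fin(1) \<sigma> b0 not_Nash])
      show "u1 y b0 + path_value A1 u1 (L (y, b0)) \<le> (\<Sum>x\<in>A1. \<sigma> x * (u1 x b0 + path_value A1 u1 (L (x, b0))))"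
        if "y \<in> A1" for y
        using M(3)[OF that] by (simp add: L_def)
      show "(\<Sum>x\<in>A1. \<sigma> x * (u2 x b + path_value A1 u2 (L (x, b))))
          \<le> (\<Sum>x\<in>A1. \<sigma> x * (u2 x b0 + path_value A1 u2 (L (x, b0))))" if "b \<in> A2" for b
        using br2 that by (simp add: u2_path sum_mixed_plus_const[OF \<sigma>] eu_def[symmetric] br2_def)
    qed
  qed
qed

section \<open>Necessity\<close>

definition Nash_from :: "'a set \<Rightarrow> 'b set \<Rightarrow> ('a \<Rightarrow> 'b \<Rightarrow> real) \<Rightarrow> ('a \<Rightarrow> 'b \<Rightarrow> real) \<Rightarrow> nat
    \<Rightarrow> (('a \<times> 'b) list \<Rightarrow> 'a \<Rightarrow> real) \<Rightarrow> (('a \<times> 'b) list \<Rightarrow> 'b) \<Rightarrow> nat \<Rightarrow> bool" where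
  "Nash_from A1 A2 u1 u2 T s1 s2 k \<longleftrightarrow>
    (\<forall>g. hist A1 A2 g \<and> k \<le> length g \<and> length g < T \<longrightarrow> (s1 g, s2 g) \<in> NashMP A1 A2 u1 u2)"

lemma last_suboptimal_history:
  assumes "locally_suboptimal A1 A2 u1 u2 T s1 s2"
  obtains h where "hist A1 A2 h" "length h < T" "(s1 h, s2 h) \<notin> NashMP A1 A2 u1 u2"
    "Nash_from A1 A2 u1 u2 T s1 s2 (Suc (length h))"
proof -
  define D where "D = {length g | g. hist A1 A2 g \<and> length g < T \<and> (s1 g, s2 g) \<notin> NashMP A1 A2 u1 u2}"
  have "finite D" by (rule finite_subset[of _ "{..<T}"]) (auto simp: D_def)
  moreover have "D \<noteq> {}" using assms by (auto simp: D_def locally_suboptimal_def)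
  ultimately have "Max D \<in> D" and Max: "\<And>k. k \<in> D \<Longrightarrow> k \<le> Max D" by simp_all
  then obtain h where h: "hist A1 A2 h" "length h < T" "(s1 h, s2 h) \<notin> NashMP A1 A2 u1 u2"
    "length h = Max D"
    by (auto simp: D_def)
  have "Nash_from A1 A2 u1 u2 T s1 s2 (Suc (length h))"
    unfolding Nash_from_def
  proof (intro allI impI)
    fix g assume g: "hist A1 A2 g \<and> Suc (length h) \<le> length g \<and> length g < T"
    show "(s1 g, s2 g) \<in> NashMP A1 A2 u1 u2"
    proof (rule ccontr)
      assume "(s1 g, s2 g) \<notin> NashMP A1 A2 u1 u2"
      then have "length g \<in> D" using g by (auto simp: D_def)
      then show False using Max g h(4) by fastforce
    qed
  qed
  with h show ?thesis by (intro that)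
qed

lemma rpay_Nash_from_const:
  assumes later: "Nash_from A1 A2 u1 u2 T s1 s2 k"
    and const: "\<And>p. p \<in> NashMP A1 A2 u1 u2 \<Longrightarrow> eu A1 u (fst p) (snd p) = v"
  shows "hist A1 A2 g \<Longrightarrow> k \<le> length g \<Longrightarrow> length g + m = T \<Longrightarrow> rpay A1 u m s1 s2 g = real m * v"
proof (induction m arbitrary: g)
  case (Suc m)
  have Nash: "(s1 g, s2 g) \<in> NashMP A1 A2 u1 u2" using later Suc.prems by (simp add: Nash_from_def)
  then have "rpay A1 u m s1 s2 (g @ [(a, s2 g)]) = real m * v" if "a \<in> A1" for a
    using Suc that by (simp add: hist_snoc mem_NashMP_iff)
  then have "rpay A1 u (Suc m) s1 s2 g = eu A1 u (s1 g) (s2 g) + real m * v"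
    using Nash by (simp add: eu_def sum_mixed_plus_const mem_NashMP_iff)
  then show ?case using const[OF Nash] by (simp add: algebra_simps)
qed simp

lemma SPE_support_indifference:
  assumes spe: "SPE A1 A2 u1 u2 T s1 s2" and fin: "finite A1"
    and g: "hist A1 A2 g" "length g < T" and a: "a \<in> support A1 (s1 g)"
  shows "u1 a (s2 g) + rpay A1 u1 (T - Suc (length g)) s1 s2 (g @ [(a, s2 g)])
    = rpay A1 u1 (T - length g) s1 s2 g"
proof (rule mixed_average_max_on_support[OF fin _ _ _ a])
  show "s1 g \<in> mixed A1" using spe g by (simp add: SPE_def strat1_def)
  show "u1 x (s2 g) + rpay A1 u1 (T - Suc (length g)) s1 s2 (g @ [(x, s2 g)]) \<le> rpay A1 u1 (T - length g) s1 s2 g"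
    if "x \<in> A1" for x
    using SPE_one_shot1[OF spe g that fin] .
  have "T - length g = Suc (T - Suc (length g))" using g(2) by simp
  then show "(\<Sum>x\<in>A1. s1 g x * (u1 x (s2 g) + rpay A1 u1 (T - Suc (length g)) s1 s2 (g @ [(x, s2 g)])))
      = rpay A1 u1 (T - length g) s1 s2 g"
    by simp
qed

lemma rpay_Nash_from_sum:
  assumes spe: "SPE A1 A2 u1 u2 T s1 s2" and fin: "finite A1" and later: "Nash_from A1 A2 u1 u2 T s1 s2 k"
  shows "hist A1 A2 g \<Longrightarrow> k \<le> length g \<Longrightarrow> length g + m = T \<Longrightarrow>
    \<exists>xs. length xs = m \<and> set xs \<subseteq> Vset A1 A2 u1 u2 u1 \<and> rpay A1 u1 m s1 s2 g = sum_list xs"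
proof (induction m arbitrary: g)
  case (Suc m)
  have Nash: "(s1 g, s2 g) \<in> NashMP A1 A2 u1 u2" using later Suc.prems by (simp add: Nash_from_def)
  then obtain a where a: "a \<in> support A1 (s1 g)"
    using support_nonempty[OF fin] by (auto simp: mem_NashMP_iff)
  then have "a \<in> A1" by (simp add: support_def)
  then have "hist A1 A2 (g @ [(a, s2 g)])" using Suc.prems Nash by (simp add: hist_snoc mem_NashMP_iff)
  then obtain xs where xs: "length xs = m" "set xs \<subseteq> Vset A1 A2 u1 u2 u1"
    "rpay A1 u1 m s1 s2 (g @ [(a, s2 g)]) = sum_list xs"
    using Suc.IH Suc.prems by fastforce
  have Tg: "T - length g = Suc m" "T - Suc (length g) = m" "length g < T" using Suc.prems by auto
  have "rpay A1 u1 (Suc m) s1 s2 g = u1 a (s2 g) + rpay A1 u1 m s1 s2 (g @ [(a, s2 g)])"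
    using SPE_support_indifference[OF spe fin Suc.prems(1) Tg(3) a] by (simp only: Tg)
  also have "\<dots> = u1 a (s2 g) + sum_list xs" by (simp add: xs(3))
  also have "u1 a (s2 g) = eu A1 u1 (s1 g) (s2 g)"
    using Nash by (intro br1_support_payoff[OF fin _ a]) (simp add: mem_NashMP_iff)
  finally show ?case
    using xs Nash by (intro exI[of _ "eu A1 u1 (s1 g) (s2 g) # xs"]) (auto simp: Vset_def)
qed simp

lemma sum_list_diff_eq_sum_list_diffs:
  fixes xs ys :: "real list"
  assumes "length xs = length ys" "set xs \<subseteq> V" "set ys \<subseteq> V"
  shows "\<exists>ds. set ds \<subseteq> {x - y | x y. x \<in> V \<and> y \<in> V} \<and> sum_list xs - sum_list ys = sum_list ds"
  using assms
proof (induction xs ys rule: list_induct2)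
  case Nil
  show ?case by (intro exI[of _ "[]"]) simp
next
  case (Cons x xs y ys)
  then obtain ds where "set ds \<subseteq> {x - y | x y. x \<in> V \<and> y \<in> V}" "sum_list xs - sum_list ys = sum_list ds"
    by auto
  with Cons.prems show ?case by (intro exI[of _ "(x - y) # ds"]) auto
qed

context
  fixes A1 :: "'a set" and A2 :: "'b set" and u1 u2 :: "'a \<Rightarrow> 'b \<Rightarrow> real"
    and T :: nat and s1 s2 and h :: "('a \<times> 'b) list"
  assumes fin: "finite A1" and spe: "SPE A1 A2 u1 u2 T s1 s2"
    and h: "hist A1 A2 h" "length h < T" and later: "Nash_from A1 A2 u1 u2 T s1 s2 (Suc (length h))"
begin

lemma last_round_strats: "s1 h \<in> mixed A1" "s2 h \<in> A2"
  using spe h by (auto simp: SPE_def strat1_def strat2_def)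

lemma last_round_rpay:
  "rpay A1 u (T - length h) s1 s2 h =
    (\<Sum>a\<in>A1. s1 h a * (u a (s2 h) + rpay A1 u (T - Suc (length h)) s1 s2 (h @ [(a, s2 h)])))"
proof -
  have "T - length h = Suc (T - Suc (length h))" using h(2) by simp
  then show ?thesis by (simp only: rpay.simps)
qed

lemma last_round_continuation_const:
  assumes "\<And>p. p \<in> NashMP A1 A2 u1 u2 \<Longrightarrow> eu A1 u (fst p) (snd p) = v" "a \<in> A1" "b \<in> A2"
  shows "rpay A1 u (T - Suc (length h)) s1 s2 (h @ [(a, b)]) = real (T - Suc (length h)) * v"
  using rpay_Nash_from_const[OF later assms(1)] h assms(2,3) by (simp add: hist_snoc)

lemma last_round_br1:
  assumes "\<And>p. p \<in> NashMP A1 A2 u1 u2 \<Longrightarrow> eu A1 u1 (fst p) (snd p) = v"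
  shows "br1 A1 u1 (s1 h) (s2 h)"
  unfolding br1_iff_pure[OF fin]
proof (intro conjI ballI last_round_strats)
  fix a assume a: "a \<in> A1"
  have "u1 a (s2 h) + real (T - Suc (length h)) * v \<le> rpay A1 u1 (T - length h) s1 s2 h"
    using SPE_one_shot1[OF spe h a fin] last_round_continuation_const[OF assms a last_round_strats(2)]
    by simp
  also have "\<dots> = eu A1 u1 (s1 h) (s2 h) + real (T - Suc (length h)) * v"
    using last_round_strats
    by (simp add: last_round_rpay last_round_continuation_const[OF assms] sum_mixed_plus_const eu_def)
  finally show "u1 a (s2 h) \<le> eu A1 u1 (s1 h) (s2 h)" by simp
qed

lemma last_round_br2:
  assumes "\<And>p. p \<in> NashMP A1 A2 u1 u2 \<Longrightarrow> eu A1 u2 (fst p) (snd p) = v"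
  shows "br2 A1 A2 u2 (s1 h) (s2 h)"
  unfolding br2_def
proof (intro conjI ballI last_round_strats)
  have expected: "(\<Sum>a\<in>A1. s1 h a * (u2 a b + rpay A1 u2 (T - Suc (length h)) s1 s2 (h @ [(a, b)])))
      = eu A1 u2 (s1 h) b + real (T - Suc (length h)) * v" if "b \<in> A2" for b
    using last_round_strats that
    by (simp add: last_round_continuation_const[OF assms] sum_mixed_plus_const eu_def)
  fix b assume b: "b \<in> A2"
  show "eu A1 u2 (s1 h) b \<le> eu A1 u2 (s1 h) (s2 h)"
    using SPE_one_shot2[OF spe h b] expected[OF b] expected[OF last_round_strats(2)]
    by (simp add: last_round_rpay)
qed

lemma last_round_gaps: "support_gaps_in_sums A1 u1 (Nash_differences A1 A2 u1 u2) (s1 h) (s2 h)"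
proof -
  define b where "b = s2 h"
  have continuation: "\<exists>xs. length xs = T - Suc (length h) \<and> set xs \<subseteq> Vset A1 A2 u1 u2 u1 \<and>
      u1 a b = rpay A1 u1 (T - length h) s1 s2 h - sum_list xs" if "a \<in> support A1 (s1 h)" for a
  proof -
    have "a \<in> A1" using that by (simp add: support_def)
    then obtain xs where "length xs = T - Suc (length h)" "set xs \<subseteq> Vset A1 A2 u1 u2 u1"
      "rpay A1 u1 (T - Suc (length h)) s1 s2 (h @ [(a, b)]) = sum_list xs"
      using rpay_Nash_from_sum[OF spe fin later, of "h @ [(a, b)]" "T - Suc (length h)"] h
        last_round_strats
      by (auto simp: hist_snoc b_def)
    then show ?thesis using SPE_support_indifference[OF spe fin h that] by (auto simp: b_def)
  qed
  obtain a where a: "a \<in> support A1 (s1 h)" using support_nonempty[OF fin last_round_strats(1)] by blast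
  have "\<exists>ds. set ds \<subseteq> Nash_differences A1 A2 u1 u2 \<and> u1 a b - u1 c b = sum_list ds"
    if "c \<in> support A1 (s1 h) - {a}" for c
    using continuation[OF a] continuation[of c] that
      sum_list_diff_eq_sum_list_diffs[of _ _ "Vset A1 A2 u1 u2 u1"]
    by (auto simp: Nash_differences_eq)
  then show ?thesis using a by (auto simp: support_gaps_in_sums_def b_def)
qed

end

lemma suboptimal_SPE_necessary:
  assumes fin: "finite A1" and "has_suboptimal_SPE A1 A2 u1 u2"
  defines "N \<equiv> NashMP A1 A2 u1 u2" and "V1 \<equiv> Vset A1 A2 u1 u2 u1" and "V2 \<equiv> Vset A1 A2 u1 u2 u2"
  shows "((\<exists>x\<in>V1. \<exists>y\<in>V1. x \<noteq> y) \<and> (\<exists>x\<in>V2. \<exists>y\<in>V2. x \<noteq> y) \<and> (\<exists>\<sigma>\<in>mixed A1. \<exists>b\<in>A2. (\<sigma>, b) \<notin> N))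
    \<or> ((\<exists>x\<in>V1. \<exists>y\<in>V1. x \<noteq> y) \<and> (\<exists>v. V2 = {v}) \<and>
        (\<exists>\<sigma>\<in>mixed A1. \<exists>a'\<in>A1. \<exists>b\<in>A2. eu A1 u1 \<sigma> b < u1 a' b \<and> br2 A1 A2 u2 \<sigma> b \<and>
          (card (support A1 \<sigma>) > 1 \<longrightarrow> support_gaps_in_sums A1 u1 (Nash_differences A1 A2 u1 u2) \<sigma> b)))
    \<or> ((\<exists>v. V1 = {v}) \<and> (\<exists>x\<in>V2. \<exists>y\<in>V2. x \<noteq> y) \<and>
        (\<exists>\<sigma>\<in>mixed A1. \<exists>b\<in>A2. \<exists>b'\<in>A2. eu A1 u2 \<sigma> b < eu A1 u2 \<sigma> b' \<and> br1 A1 u1 \<sigma> b))"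
proof -
  obtain T s1 s2 where spe: "SPE A1 A2 u1 u2 T s1 s2" and subopt: "locally_suboptimal A1 A2 u1 u2 T s1 s2"
    using assms(2) by (auto simp: has_suboptimal_SPE_def)
  from subopt obtain h where h: "hist A1 A2 h" "length h < T" and not_Nash: "(s1 h, s2 h) \<notin> N"
    and later: "Nash_from A1 A2 u1 u2 T s1 s2 (Suc (length h))"
    unfolding N_def by (rule last_suboptimal_history)
  note last_round = last_round_strats[OF fin spe h later] last_round_br1[OF fin spe h later]
    last_round_br2[OF fin spe h later] last_round_gaps[OF fin spe h later]
  have br1: "br1 A1 u1 (s1 h) (s2 h)" if "\<not> (\<exists>x\<in>V1. \<exists>y\<in>V1. x \<noteq> y)"
    using Vset_const[OF that[unfolded V1_def]] last_round(3) by metis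
  have br2: "br2 A1 A2 u2 (s1 h) (s2 h)" if "\<not> (\<exists>x\<in>V2. \<exists>y\<in>V2. x \<noteq> y)"
    using Vset_const[OF that[unfolded V2_def]] last_round(4) by metis
  show ?thesis
  proof (cases "\<exists>x\<in>V1. \<exists>y\<in>V1. x \<noteq> y"; cases "\<exists>x\<in>V2. \<exists>y\<in>V2. x \<noteq> y")
    assume V1: "\<exists>x\<in>V1. \<exists>y\<in>V1. x \<noteq> y" and V2: "\<not> (\<exists>x\<in>V2. \<exists>y\<in>V2. x \<noteq> y)"
    then have "\<not> br1 A1 u1 (s1 h) (s2 h)" using br2 not_Nash last_round(1,2) by (auto simp: N_def NashMP_def)
    then obtain a' where "a' \<in> A1" "eu A1 u1 (s1 h) (s2 h) < u1 a' (s2 h)"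
      using last_round(1) fin by (auto simp: br1_iff_pure not_le)
    then show ?thesis
      using V1 V2 Vset_singleton[of A1 A2 u1 u2 u2 u1] br2 last_round(1,2,5) unfolding V1_def V2_def by blast
  next
    assume V1: "\<not> (\<exists>x\<in>V1. \<exists>y\<in>V1. x \<noteq> y)" and V2: "\<exists>x\<in>V2. \<exists>y\<in>V2. x \<noteq> y"
    then have "\<not> br2 A1 A2 u2 (s1 h) (s2 h)" using br1 not_Nash last_round(1,2) by (auto simp: N_def NashMP_def)
    then obtain b' where "b' \<in> A2" "eu A1 u2 (s1 h) (s2 h) < eu A1 u2 (s1 h) b'"
      using last_round(2) by (auto simp: br2_def not_le)
    then show ?thesis
      using V1 V2 Vset_singleton[of A1 A2 u1 u2 u1 u2] br1 last_round(1,2) unfolding V1_def V2_def by blast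
  qed (use br1 br2 not_Nash last_round(1,2) in \<open>auto simp: N_def NashMP_def\<close>)
qed

theorem mainTheorem6:
  fixes A1 :: "'a set" and A2 :: "'b set" and u1 u2 :: "'a \<Rightarrow> 'b \<Rightarrow> real"
  assumes "finite A1" "A1 \<noteq> {}" "finite A2" "A2 \<noteq> {}"
  defines "N \<equiv> NashMP A1 A2 u1 u2"
    and "V1 \<equiv> Vset A1 A2 u1 u2 u1"
    and "V2 \<equiv> Vset A1 A2 u1 u2 u2"
  shows "(\<exists>T::nat. 0 < T \<and> (\<exists>s1 s2. SPE A1 A2 u1 u2 T s1 s2 \<and> locally_suboptimal A1 A2 u1 u2 T s1 s2))
    \<longleftrightarrow>
    ( ((\<exists>x\<in>V1. \<exists>y\<in>V1. x \<noteq> y) \<and> (\<exists>x\<in>V2. \<exists>y\<in>V2. x \<noteq> y) \<and>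
        (\<exists>\<sigma>\<in>mixed A1. \<exists>b\<in>A2. (\<sigma>, b) \<notin> N))
    \<or> ((\<exists>x\<in>V1. \<exists>y\<in>V1. x \<noteq> y) \<and> (\<exists>v. V2 = {v}) \<and>
        (\<exists>\<sigma>\<in>mixed A1. \<exists>a'\<in>A1. \<exists>b\<in>A2.
           eu A1 u1 \<sigma> b < u1 a' b \<and> br2 A1 A2 u2 \<sigma> b \<and>
           (card (support A1 \<sigma>) > 1 \<longrightarrow>
              (\<exists>a\<in>support A1 \<sigma>. \<forall>a''\<in>support A1 \<sigma> - {a}.
                 \<exists>ds::real list.
                   set ds \<subseteq> {eu A1 u1 \<sigma>' b' - eu A1 u1 \<sigma>'' b'' | \<sigma>' b' \<sigma>'' b''.
                                  (\<sigma>', b') \<in> N \<and> (\<sigma>'', b'') \<in> N} \<and>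
                   u1 a b - u1 a'' b = sum_list ds))))
    \<or> ((\<exists>v. V1 = {v}) \<and> (\<exists>x\<in>V2. \<exists>y\<in>V2. x \<noteq> y) \<and>
        (\<exists>\<sigma>\<in>mixed A1. \<exists>b\<in>A2. \<exists>b'\<in>A2.
           eu A1 u2 \<sigma> b < eu A1 u2 \<sigma> b' \<and> br1 A1 u1 \<sigma> b)) )"
  unfolding N_def V1_def V2_def Nash_differences_def[symmetric] support_gaps_in_sums_def[symmetric]
    has_suboptimal_SPE_def[symmetric]
  by (rule iffI, rule suboptimal_SPE_necessary[OF assms(1)], assumption)
    (elim disjE conjE exE; blast intro: has_suboptimal_SPE_if_both_vary[OF assms(1,3)]
      has_suboptimal_SPE_if_V2_const[OF assms(1,3)] has_suboptimal_SPE_if_V1_const[OF assms(1,3)])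

end
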